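(* For $n>5$ let $P_{2n}(x)=x^{2n}+x^{n+5}+x^{n+3}+x^{n+1}+x^{n-1}+x^{n-3}+x^{n-5}+1$. Let $\beta\in(0,1)$ be the positive real number with $16\beta^5-16\beta^3+3\beta=1$ (so that the real solutions of $16x^5-16x^3+3x=\pm1$ are exactly $\pm\beta$, $\beta\approx 0.92757157104$). Then $\lim_{n\to\infty}C(P_{2n})=\frac{2}{\pi}\arccos(\beta)\approx 0.243784699$.
   Context: For a polynomial $P$ of degree $d$, let $I(P)$ and $E(P)$ denote the numbers of complex zeros of $P$ (counted with multiplicity) of modulus $<1$ and $>1$ respectively, and $C(P)=\frac{I(P)+E(P)}{d}$. *)

theory Defs
  imports "HOL-Analysis.Analysis" "HOL-Computational_Algebra.Polynomial"
begin

definition inner_zeros :: "complex poly \<Rightarrow> nat" where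
  "inner_zeros p = (\<Sum>z\<in>{z. poly p z = 0 \<and> cmod z < 1}. order z p)"

definition outer_zeros :: "complex poly \<Rightarrow> nat" where
  "outer_zeros p = (\<Sum>z\<in>{z. poly p z = 0 \<and> cmod z > 1}. order z p)"

definition C_ratio :: "complex poly \<Rightarrow> real" where
  "C_ratio p = real (inner_zeros p + outer_zeros p) / real (degree p)"

definition P2n :: "nat \<Rightarrow> complex poly" where
  "P2n n = monom 1 (2*n) + monom 1 (n+5) + monom 1 (n+3) + monom 1 (n+1)
           + monom 1 (n-1) + monom 1 (n-3) + monom 1 (n-5) + 1"

end

theory Submission
  imports Defs "HOL-Computational_Algebra.Fundamental_Theorem_Algebra"
begin

(*
  On the unit circle P2n n (cis t) = 2 cis (n t) (cos (n t) + G t), where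
  G t = cos t + cos 3t + cos 5t = f (cos t) with f x = 16 x^5 - 16 x^3 + 3 x.  Since
  |f x| <= 1 exactly when |x| <= beta, every unimodular zero lies on the arcs
  alpha <= t <= pi - alpha and pi + alpha <= t <= 2 pi - alpha, where alpha = arccos beta.

  Lower bound: strictly inside the arcs |G| < 1, so cos (n t) + G t changes sign between
  consecutive nodes k pi / n, which yields 2 n (pi - 2 alpha) / pi - O(n d) zeros.
  Upper bound: between two nodes, at distance at least c from them, the derivative is
  dominated by n sin (n t), so there is at most one zero and it is simple; within distance c
  of a node the second derivative is dominated by n^2 cos (n t), so there are at most two zeros
  of multiplicity at most two, and there |G| = |cos (n t)| is close to 1, which confines them
  to bands of width d at the ends of the arcs.

  Hence the unimodular zeros number 2 n (1 - 2 alpha / pi) + o(n) with multiplicity, and all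
  other zeros lie off the circle, so C (P2n n) tends to 2 alpha / pi.
*)

lemma bernstein_form_pos:
  fixes x l u :: real
  assumes "l < u" "l \<le> x" "x \<le> u" "bs \<noteq> []" "\<forall>b\<in>set bs. 0 \<le> b" "0 < hd bs" "0 < last bs"
  shows "0 < (\<Sum>i<length bs. bs ! i * (x - l) ^ i * (u - x) ^ (length bs - 1 - i))"
proof -
  define i0 where "i0 = (if x < u then 0 else length bs - 1)"
  have nonneg: "0 \<le> bs ! i * (x - l) ^ i * (u - x) ^ (length bs - 1 - i)"
    if "i \<in> {..<length bs}" for i
    using assms(2,3,5) that by (simp add: nth_mem)
  have i0: "i0 \<in> {..<length bs}" using assms(4) by (simp add: i0_def)
  have "0 < bs ! i0 * (x - l) ^ i0 * (u - x) ^ (length bs - 1 - i0)"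
  proof (cases "x < u")
    case True
    then show ?thesis using assms(4,6) by (simp add: i0_def hd_conv_nth)
  next
    case False
    then have "x = u" using assms(3) by simp
    then show ?thesis using assms(1,4,7) by (simp add: i0_def last_conv_nth)
  qed
  then show ?thesis by (rule sum_pos2[OF finite_lessThan i0 _ nonneg])
qed

lemma finite_card_le_2_if_no_increasing_triple:
  fixes S :: "'a::linorder set"
  assumes "\<And>x y z. x \<in> S \<Longrightarrow> y \<in> S \<Longrightarrow> z \<in> S \<Longrightarrow> x < y \<Longrightarrow> y < z \<Longrightarrow> False"
  shows "finite S" "card S \<le> 2"
proof -
  have small: "card B \<le> 2" if "finite B" "B \<subseteq> S" for B
  proof (rule ccontr)
    assume "\<not> card B \<le> 2"
    define xs where "xs = sorted_list_of_set B"
    have len: "2 < length xs" using \<open>\<not> card B \<le> 2\<close> by (simp add: xs_def)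
    have "xs ! 0 < xs ! 1" "xs ! 1 < xs ! 2"
      using len strict_sorted_list_of_set[of B] by (auto simp: xs_def sorted_wrt_iff_nth_less)
    moreover have "xs ! i \<in> S" if "i \<le> 2" for i
      using that len \<open>finite B\<close> \<open>B \<subseteq> S\<close> nth_mem[of i xs] by (auto simp: xs_def)
    ultimately show False using assms[of "xs ! 0" "xs ! 1" "xs ! 2"] by fastforce
  qed
  show "finite S"
  proof (rule ccontr)
    assume "infinite S"
    then obtain B where "finite B" "card B = 3" "B \<subseteq> S" by (meson infinite_arbitrarily_large)
    then show False using small by fastforce
  qed
  then show "card S \<le> 2" using small by blast
qed

lemma card_le_mult_card_image:
  assumes "finite S" "\<And>y. card {x \<in> S. f x = y} \<le> m"
  shows "card S \<le> m * card (f ` S)"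
proof -
  have "card S = (\<Sum>y\<in>f ` S. card {x \<in> S. f x = y})"
    using sum.group[OF assms(1) finite_imageI[OF assms(1)] subset_refl, where g = f and h = "\<lambda>_. 1::nat"]
    by simp
  also have "\<dots> \<le> (\<Sum>y\<in>f ` S. m)" by (intro sum_mono assms(2))
  finally show ?thesis by (simp add: mult.commute)
qed

lemma deriv_zero_between:
  fixes h :: "real \<Rightarrow> real"
  assumes "x < y" "h x = h y" "\<And>t. x \<le> t \<Longrightarrow> t \<le> y \<Longrightarrow> (h has_real_derivative h' t) (at t)"
  obtains z where "x < z" "z < y" "h' z = 0"
proof -
  have cont: "continuous_on {x..y} h"
    by (rule DERIV_atLeastAtMost_imp_continuous_on) (use assms(3) in blast)
  have der: "(h has_derivative (\<lambda>v. h' t * v)) (at t)" if "x < t" "t < y" for t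
    using assms(3)[of t] that by (simp add: has_field_derivative_def)
  obtain z where z: "x < z" "z < y" "(\<lambda>v. h' z * v) = (\<lambda>v. 0)"
    using Rolle_deriv[OF assms(1,2) cont, of "\<lambda>t v. h' t * v"] der by blast
  from fun_cong[OF z(3), of 1] have "h' z = 0" by simp
  with z(1,2) show thesis by (rule that)
qed

lemma inj_on_if_deriv_nonzero:
  fixes h :: "real \<Rightarrow> real"
  assumes "\<And>t. l \<le> t \<Longrightarrow> t \<le> u \<Longrightarrow> (h has_real_derivative h' t) (at t)"
    and "\<And>t. l \<le> t \<Longrightarrow> t \<le> u \<Longrightarrow> h' t \<noteq> 0"
  shows "inj_on h {l..u}"
proof (rule linorder_inj_onI')
  fix x y assume xy: "x \<in> {l..u}" "y \<in> {l..u}" "x < y"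
  show "h x \<noteq> h y"
  proof
    assume "h x = h y"
    then obtain z where "x < z" "z < y" "h' z = 0"
      using deriv_zero_between[of x y h h'] xy assms(1) by (metis atLeastAtMost_iff order.trans)
    then show False using xy assms(2)[of z] by auto
  qed
qed

lemma finite_card_zeros_le_2_if_second_deriv_nonzero:
  fixes h :: "real \<Rightarrow> real"
  assumes h: "\<And>t. l \<le> t \<Longrightarrow> t \<le> u \<Longrightarrow> (h has_real_derivative h' t) (at t)"
    and h': "\<And>t. l \<le> t \<Longrightarrow> t \<le> u \<Longrightarrow> (h' has_real_derivative h'' t) (at t)"
    and h'': "\<And>t. l \<le> t \<Longrightarrow> t \<le> u \<Longrightarrow> h'' t \<noteq> 0"
  shows "finite {t \<in> {l..u}. h t = 0}" "card {t \<in> {l..u}. h t = 0} \<le> 2"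
proof -
  have False if xyz: "x \<in> {t \<in> {l..u}. h t = 0}" "y \<in> {t \<in> {l..u}. h t = 0}"
    "z \<in> {t \<in> {l..u}. h t = 0}" "x < y" "y < z" for x y z
  proof -
    obtain r where r: "x < r" "r < y" "h' r = 0"
      using deriv_zero_between[of x y h h'] xyz h by force
    obtain s where s: "y < s" "s < z" "h' s = 0"
      using deriv_zero_between[of y z h h'] xyz h by force
    have "inj_on h' {l..u}" by (rule inj_on_if_deriv_nonzero[OF h' h''])
    moreover have "r \<in> {l..u}" "s \<in> {l..u}" using r s xyz by auto
    ultimately have "r = s" using r(3) s(3) by (metis inj_onD)
    then show False using r(2) s(1) by simp
  qed
  then show "finite {t \<in> {l..u}. h t = 0}" "card {t \<in> {l..u}. h t = 0} \<le> 2"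
    using finite_card_le_2_if_no_increasing_triple by blast+
qed

lemma card_floor_image_le:
  fixes S :: "real set" and r c l u :: real
  assumes "S \<subseteq> {l..u}" "l \<le> u" "0 \<le> r" "0 \<le> c" "c \<le> 1"
  shows "real (card ((\<lambda>t. \<lfloor>r * t + c\<rfloor>) ` S)) \<le> r * (u - l) + 3"
proof -
  have sub: "(\<lambda>t. \<lfloor>r * t + c\<rfloor>) ` S \<subseteq> {\<lfloor>r * l\<rfloor>..\<lfloor>r * u\<rfloor> + 1}"
  proof
    fix j assume "j \<in> (\<lambda>t. \<lfloor>r * t + c\<rfloor>) ` S"
    then obtain t where "t \<in> S" and j: "j = \<lfloor>r * t + c\<rfloor>" by blast
    then have "l \<le> t" "t \<le> u" using assms(1) by auto
    then have "r * l \<le> r * t + c" "r * t + c \<le> r * u + 1"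
      using assms(3-5) mult_left_mono[of l t r] mult_left_mono[of t u r] by linarith+
    then have "\<lfloor>r * l\<rfloor> \<le> j" "j \<le> \<lfloor>r * u + 1\<rfloor>"
      unfolding j by (simp_all only: floor_mono)
    then show "j \<in> {\<lfloor>r * l\<rfloor>..\<lfloor>r * u\<rfloor> + 1}" by simp
  qed
  have "\<lfloor>r * l\<rfloor> \<le> \<lfloor>r * u\<rfloor>" using assms(2,3) by (simp add: floor_mono mult_left_mono)
  then have "real (card {\<lfloor>r * l\<rfloor>..\<lfloor>r * u\<rfloor> + 1}) = \<lfloor>r * u\<rfloor> + 2 - \<lfloor>r * l\<rfloor>" by simp
  moreover have "real_of_int \<lfloor>r * u\<rfloor> \<le> r * u" "r * l - 1 < real_of_int \<lfloor>r * l\<rfloor>" by linarith+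
  moreover have "real (card ((\<lambda>t. \<lfloor>r * t + c\<rfloor>) ` S)) \<le> card {\<lfloor>r * l\<rfloor>..\<lfloor>r * u\<rfloor> + 1}"
    using card_mono[OF finite_atLeastAtMost_int sub] by (simp only: of_nat_le_iff)
  ultimately show ?thesis by (simp only: right_diff_distrib)
qed

lemma card_floor_image_le_sum:
  fixes S :: "real set" and r c :: real and Is :: "(real \<times> real) list"
  assumes "S \<subseteq> (\<Union>(l, u)\<in>set Is. {l..u})" "\<forall>(l, u)\<in>set Is. l \<le> u" "0 \<le> r" "0 \<le> c" "c \<le> 1"
  shows "real (card ((\<lambda>t. \<lfloor>r * t + c\<rfloor>) ` S)) \<le> (\<Sum>(l, u)\<leftarrow>Is. r * (u - l) + 3)"
  using assms(1,2)
proof (induction Is arbitrary: S)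
  case Nil
  then show ?case by simp
next
  case (Cons I Is)
  obtain l u where I: "I = (l, u)" by fastforce
  let ?\<kappa> = "\<lambda>t. \<lfloor>r * t + c\<rfloor>"
  have "?\<kappa> ` S = ?\<kappa> ` (S \<inter> {l..u}) \<union> ?\<kappa> ` (S - {l..u})" by blast
  then have "card (?\<kappa> ` S) \<le> card (?\<kappa> ` (S \<inter> {l..u})) + card (?\<kappa> ` (S - {l..u}))"
    using card_Un_le by simp
  moreover have "real (card (?\<kappa> ` (S \<inter> {l..u}))) \<le> r * (u - l) + 3"
    using Cons.prems(2) assms(3-5) I by (intro card_floor_image_le) auto
  moreover have "real (card (?\<kappa> ` (S - {l..u}))) \<le> (\<Sum>(l, u)\<leftarrow>Is. r * (u - l) + 3)"
    using Cons.prems I by (intro Cons.IH) auto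
  ultimately show ?case using I by simp
qed

lemma exists_zero_if_sign_change:
  fixes h :: "real \<Rightarrow> real"
  assumes "x \<le> y" "continuous_on {x..y} h" "h x * h y < 0"
  obtains z where "x < z" "z < y" "h z = 0"
proof -
  have "\<exists>z. x \<le> z \<and> z \<le> y \<and> h z = 0"
  proof (cases "h x < 0")
    case True
    then have "0 < h y" using assms(3) by (simp add: mult_less_0_iff)
    then show ?thesis using IVT'[of h x 0 y] True assms(1,2) by simp
  next
    case False
    then have "h y < 0" using assms(3) by (simp add: mult_less_0_iff)
    then show ?thesis using IVT2'[of h y 0 x] False assms(1,2) by simp
  qed
  then obtain z where "x \<le> z" "z \<le> y" "h z = 0" by blast
  moreover have "h x \<noteq> 0" "h y \<noteq> 0" using assms(3) by auto
  ultimately show thesis using that[of z] by force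
qed

lemma exists_zero_cos_plus_between_nodes:
  fixes G :: "real \<Rightarrow> real" and n :: nat and j :: int
  assumes "0 < n" "continuous_on {real_of_int j * pi / n..real_of_int (j + 1) * pi / n} G"
    and "\<bar>G (real_of_int j * pi / n)\<bar> < 1" "\<bar>G (real_of_int (j + 1) * pi / n)\<bar> < 1"
  obtains z where "real_of_int j * pi / n < z" "z < real_of_int (j + 1) * pi / n"
    "cos (real n * z) + G z = 0"
proof -
  define h where "h t = cos (real n * t) + G t" for t
  have h_node: "h (real_of_int i * pi / n) = (if even i then 1 else -1) + G (real_of_int i * pi / n)"
    for i
  proof -
    have "real n * (real_of_int i * pi / n) = pi * of_int i" using assms(1) by simp
    then show ?thesis by (simp add: h_def)
  qed
  have "h (real_of_int j * pi / n) * h (real_of_int (j + 1) * pi / n) < 0"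
    using assms(3,4) unfolding h_node by (auto simp: mult_less_0_iff abs_less_iff)
  moreover have "continuous_on {real_of_int j * pi / n..real_of_int (j + 1) * pi / n} h"
    unfolding h_def by (intro continuous_intros assms(2))
  moreover have "real_of_int j * pi / n \<le> real_of_int (j + 1) * pi / n"
    by (simp add: divide_right_mono)
  ultimately obtain z
    where "real_of_int j * pi / n < z" "z < real_of_int (j + 1) * pi / n" "h z = 0"
    using exists_zero_if_sign_change by blast
  then show thesis using that by (simp add: h_def)
qed

lemma exists_zeros_cos_plus:
  fixes G :: "real \<Rightarrow> real" and n :: nat
  assumes "0 < n" "continuous_on {l..u} G" "\<And>t. l \<le> t \<Longrightarrow> t \<le> u \<Longrightarrow> \<bar>G t\<bar> < 1"
  obtains S where "finite S" "S \<subseteq> {t \<in> {l..u}. cos (real n * t) + G t = 0}"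
    "real n * (u - l) / pi - 2 \<le> card S"
proof -
  define node where "node j = real_of_int j * pi / n" for j
  define J where "J = {\<lceil>n * l / pi\<rceil>..\<lfloor>n * u / pi\<rfloor> - 1}"
  have node_mono: "node i \<le> node j" if "i \<le> j" for i j
    using that by (simp add: node_def divide_right_mono)
  have node_in: "l \<le> node j" "node (j + 1) \<le> u" if "j \<in> J" for j
  proof -
    have "n * l / pi \<le> j" "j + 1 \<le> \<lfloor>n * u / pi\<rfloor>"
      using that by (simp_all add: J_def ceiling_le_iff)
    then have "n * l / pi \<le> j" "j + 1 \<le> n * u / pi" by linarith+
    then show "l \<le> node j" "node (j + 1) \<le> u"
      using assms(1) by (simp_all add: node_def field_simps)
  qed
  have "\<forall>j\<in>J. \<exists>z. node j < z \<and> z < node (j + 1) \<and> cos (real n * z) + G z = 0"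
  proof
    fix j assume j: "j \<in> J"
    have "continuous_on {node j..node (j + 1)} G"
      using node_in[OF j] by (intro continuous_on_subset[OF assms(2)]) auto
    moreover have "\<bar>G (node j)\<bar> < 1" "\<bar>G (node (j + 1))\<bar> < 1"
      using assms(3) node_in[OF j] node_mono[of j "j + 1"] by auto
    ultimately obtain z where "node j < z" "z < node (j + 1)" "cos (real n * z) + G z = 0"
      unfolding node_def by (rule exists_zero_cos_plus_between_nodes[OF assms(1)])
    then show "\<exists>z. node j < z \<and> z < node (j + 1) \<and> cos (real n * z) + G z = 0" by blast
  qed
  then obtain \<zeta>
    where \<zeta>: "\<forall>j\<in>J. node j < \<zeta> j \<and> \<zeta> j < node (j + 1) \<and> cos (real n * \<zeta> j) + G (\<zeta> j) = 0"
    by (metis bchoice)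
  have "inj_on \<zeta> J"
  proof (rule linorder_inj_onI')
    fix i j assume "i \<in> J" "j \<in> J" "i < j"
    then have "\<zeta> i < node (i + 1)" "node (i + 1) \<le> node j" "node j < \<zeta> j"
      using \<zeta> node_mono[of "i + 1" j] by auto
    then show "\<zeta> i \<noteq> \<zeta> j" by simp
  qed
  show thesis
  proof (rule that[of "\<zeta> ` J"])
    show "finite (\<zeta> ` J)" by (simp add: J_def)
    show "\<zeta> ` J \<subseteq> {t \<in> {l..u}. cos (real n * t) + G t = 0}"
      using \<zeta> node_in by force
    have "\<lfloor>n * u / pi\<rfloor> - \<lceil>n * l / pi\<rceil> \<le> int (card J)" by (simp add: J_def)
    moreover have "real n * u / pi - 1 < \<lfloor>n * u / pi\<rfloor>" "\<lceil>n * l / pi\<rceil> < real n * l / pi + 1"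
      by linarith+
    moreover have "real n * (u - l) / pi = real n * u / pi - real n * l / pi"
      by (simp add: diff_divide_distrib right_diff_distrib)
    ultimately show "real n * (u - l) / pi - 2 \<le> card (\<zeta> ` J)"
      using card_image[OF \<open>inj_on \<zeta> J\<close>] by linarith
  qed
qed

lemma order_le_if_poly_higher_pderiv_nonzero:
  fixes p :: "'a::{idom,semiring_char_0} poly"
  assumes "poly ((pderiv ^^ k) p) x \<noteq> 0"
  shows "order x p \<le> k"
  using assms
proof (induction k arbitrary: p)
  case 0
  then show ?case by (simp add: order_root)
next
  case (Suc k)
  show ?case
  proof (cases "poly p x = 0")
    case True
    have "p \<noteq> 0" using Suc.prems by (auto simp del: funpow.simps)
    then have "order x p = Suc (order x (pderiv p))" using order_pderiv True by blast
    moreover have "order x (pderiv p) \<le> k"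
      using Suc.IH[of "pderiv p"] Suc.prems by (simp add: funpow_Suc_right del: funpow.simps)
    ultimately show ?thesis by simp
  next
    case False
    then show ?thesis by (simp add: order_root)
  qed
qed

definition unit_root_angles :: "complex poly \<Rightarrow> real set" where
  "unit_root_angles p = {t. 0 \<le> t \<and> t < 2 * pi \<and> poly p (cis t) = 0}"

definition unit_root_count :: "complex poly \<Rightarrow> nat" where
  "unit_root_count p = (\<Sum>t\<in>unit_root_angles p. order (cis t) p)"

lemma inj_on_cis: "inj_on cis {0..<2 * pi}"
  by (rule inj_on_inverseI[where g = Arg2pi]) (simp add: cis_conv_exp Arg2pi_exp)

lemma cis_image_unit_root_angles: "cis ` unit_root_angles p = {z. poly p z = 0 \<and> cmod z = 1}"
proof
  show "cis ` unit_root_angles p \<subseteq> {z. poly p z = 0 \<and> cmod z = 1}"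
    by (auto simp: unit_root_angles_def)
  show "{z. poly p z = 0 \<and> cmod z = 1} \<subseteq> cis ` unit_root_angles p"
  proof
    fix z assume z: "z \<in> {z. poly p z = 0 \<and> cmod z = 1}"
    then have "z = cis (Arg2pi z)" by (simp add: cis_conv_exp complex_norm_eq_1_exp)
    with z Arg2pi[of z] show "z \<in> cis ` unit_root_angles p"
      by (auto simp: unit_root_angles_def intro!: image_eqI[of z cis "Arg2pi z"])
  qed
qed

lemma inj_on_cis_unit_root_angles: "inj_on cis (unit_root_angles p)"
  by (rule inj_on_subset[OF inj_on_cis]) (auto simp: unit_root_angles_def)

lemma finite_unit_root_angles: "p \<noteq> 0 \<Longrightarrow> finite (unit_root_angles p)"
proof -
  assume "p \<noteq> 0"
  then have "finite (cis ` unit_root_angles p)"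
    unfolding cis_image_unit_root_angles by (auto intro: finite_subset[OF _ poly_roots_finite])
  then show ?thesis using inj_on_cis_unit_root_angles by (rule finite_imageD)
qed

lemma card_unit_root_angles_le:
  assumes "p \<noteq> 0"
  shows "card (unit_root_angles p) \<le> unit_root_count p"
proof -
  have "1 \<le> order (cis t) p" if "t \<in> unit_root_angles p" for t
    using that assms order_root[of p "cis t"] by (auto simp: unit_root_angles_def)
  then show ?thesis unfolding unit_root_count_def card_eq_sum by (rule sum_mono)
qed

lemma inner_outer_unit_root_count:
  assumes "p \<noteq> 0"
  shows "inner_zeros p + outer_zeros p + unit_root_count p = degree p"
proof -
  define A where "A = {z. poly p z = 0 \<and> cmod z < 1}"
  define B where "B = {z. poly p z = 0 \<and> cmod z > 1}"
  define C where "C = {z. poly p z = 0 \<and> cmod z = 1}"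
  have fin: "finite A" "finite B" "finite C"
    using poly_roots_finite[OF assms] by (auto simp: A_def B_def C_def intro: finite_subset)
  have "{z. poly p z = 0} = A \<union> B \<union> C" by (auto simp: A_def B_def C_def)
  then have "degree p = (\<Sum>z\<in>A \<union> B \<union> C. order z p)"
    using assms by (simp add: size_proots_complex[symmetric] size_multiset_overloaded_eq)
  also have "\<dots> = (\<Sum>z\<in>A. order z p) + (\<Sum>z\<in>B. order z p) + (\<Sum>z\<in>C. order z p)"
    using fin
    by (subst sum.union_disjoint; (subst sum.union_disjoint)?) (auto simp: A_def B_def C_def)
  also have "(\<Sum>z\<in>C. order z p) = unit_root_count p"
    unfolding C_def unit_root_count_def cis_image_unit_root_angles[symmetric]
    by (simp add: sum.reindex[OF inj_on_cis_unit_root_angles])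
  finally show ?thesis by (simp add: A_def B_def inner_zeros_def outer_zeros_def)
qed

lemma C_ratio_eq_unit_root_count:
  assumes "p \<noteq> 0" "0 < degree p"
  shows "C_ratio p = 1 - unit_root_count p / degree p"
proof -
  have "real (inner_zeros p + outer_zeros p) = real (degree p) - real (unit_root_count p)"
    using inner_outer_unit_root_count[OF assms(1)] by linarith
  then show ?thesis using assms(2) by (simp add: C_ratio_def field_simps)
qed

text \<open>
  \<open>pair_poly n K\<close> is \<open>z^n\<close> times the sum of \<open>z^k + z^(-k)\<close>, so on the unit circle it equals
  \<open>2 cis (n t)\<close> times \<open>cos_sum K t\<close>.  Its derivatives are evaluated through the Euler operator
  \<open>z d/dz\<close>, which multiplies \<open>z^m\<close> by \<open>m\<close> and turns the symmetric pairs into \<open>sin_moment\<close> and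
  \<open>cos_moment\<close>.
\<close>

definition pair_poly :: "nat \<Rightarrow> nat set \<Rightarrow> complex poly" where
  "pair_poly n K = (\<Sum>k\<in>K. monom 1 (n + k) + monom 1 (n - k))"

definition cos_sum :: "nat set \<Rightarrow> real \<Rightarrow> real" where
  "cos_sum K t = (\<Sum>k\<in>K. cos (real k * t))"

definition sin_moment :: "nat set \<Rightarrow> real \<Rightarrow> real" where
  "sin_moment K t = (\<Sum>k\<in>K. real k * sin (real k * t))"

definition cos_moment :: "nat set \<Rightarrow> real \<Rightarrow> real" where
  "cos_moment K t = (\<Sum>k\<in>K. (real k)\<^sup>2 * cos (real k * t))"

lemma cos_sum_has_real_derivative: "(cos_sum K has_real_derivative - sin_moment K t) (at t)"
proof -
  have "(cos_sum K has_real_derivative (\<Sum>k\<in>K. - (real k * sin (real k * t)))) (at t)"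
    unfolding cos_sum_def[abs_def] by (intro DERIV_sum derivative_eq_intros) auto
  then show ?thesis by (simp add: sin_moment_def sum_negf)
qed

lemma sin_moment_has_real_derivative: "(sin_moment K has_real_derivative cos_moment K t) (at t)"
proof -
  have "(sin_moment K has_real_derivative (\<Sum>k\<in>K. (real k)\<^sup>2 * cos (real k * t))) (at t)"
    unfolding sin_moment_def[abs_def]
    by (intro DERIV_sum derivative_eq_intros) (auto simp: power2_eq_square)
  then show ?thesis by (simp add: cos_moment_def)
qed

lemma mult_poly_pderiv_monom: "z * poly (pderiv (monom 1 e)) z = of_nat e * z ^ e"
  for z :: complex
  by (cases e) (simp_all add: pderiv_monom poly_monom)

lemma power2_mult_poly_pderiv2_monom:
  "z\<^sup>2 * poly (pderiv (pderiv (monom 1 e))) z = of_nat e * (of_nat e - 1) * z ^ e"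
  for z :: complex
proof (cases e)
  case (Suc m)
  then show ?thesis
    by (cases m) (simp_all add: pderiv_monom poly_monom power2_eq_square algebra_simps)
qed simp

lemma cis_pair_combination:
  "of_real a * cis x + of_real b * cis (- x)
    = of_real ((a + b) * cos x) + \<i> * of_real ((a - b) * sin x)"
  by (simp add: complex_eq_iff algebra_simps)

lemma pair_sum_at_cis:
  fixes w :: "nat \<Rightarrow> real"
  assumes "\<forall>k\<in>K. k \<le> n"
  shows "(\<Sum>k\<in>K. of_real (w (n + k)) * cis t ^ (n + k) + of_real (w (n - k)) * cis t ^ (n - k))
    = cis (n * t) * (of_real (\<Sum>k\<in>K. (w (n + k) + w (n - k)) * cos (k * t))
                     + \<i> * of_real (\<Sum>k\<in>K. (w (n + k) - w (n - k)) * sin (k * t)))"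
proof -
  have "of_real (w (n + k)) * cis t ^ (n + k) + of_real (w (n - k)) * cis t ^ (n - k)
      = cis (n * t) * (of_real ((w (n + k) + w (n - k)) * cos (k * t))
                      + \<i> * of_real ((w (n + k) - w (n - k)) * sin (k * t)))" if "k \<in> K" for k
  proof -
    have "k \<le> n" using assms that by blast
    \<comment> \<open>qualified: HOL-Analysis shadows \<open>DeMoivre\<close> by a lemma about \<open>cos z + \<i> * sin z\<close>\<close>
    have "cis t ^ (n + k) = cis (n * t) * cis (k * t)"
      by (simp only: Complex.DeMoivre of_nat_add distrib_right cis_mult)
    moreover have "cis t ^ (n - k) = cis (n * t) * cis (- (k * t))"
      by (simp only: Complex.DeMoivre of_nat_diff[OF \<open>k \<le> n\<close>] cis_mult diff_conv_add_uminus
          distrib_right mult_minus_left)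
    ultimately have "of_real (w (n + k)) * cis t ^ (n + k) + of_real (w (n - k)) * cis t ^ (n - k)
        = cis (n * t) * (of_real (w (n + k)) * cis (k * t) + of_real (w (n - k)) * cis (- (k * t)))"
      by (simp add: algebra_simps)
    then show ?thesis by (simp only: cis_pair_combination)
  qed
  then show ?thesis
    by (simp add: sum_distrib_left sum.distrib of_real_sum distrib_left)
qed

lemma pderiv_sum: "pderiv (sum f A) = (\<Sum>x\<in>A. pderiv (f x))"
  using higher_pderiv_sum[of 1] by simp

lemma poly_pair_poly_cis:
  assumes "\<forall>k\<in>K. k \<le> n"
  shows "poly (pair_poly n K) (cis t) = cis (n * t) * of_real (2 * cos_sum K t)"
  using pair_sum_at_cis[OF assms, of "\<lambda>_. 1" t]
  by (simp add: pair_poly_def poly_sum poly_monom cos_sum_def sum_distrib_left)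

lemma cis_mult_poly_pderiv_pair_poly:
  assumes "\<forall>k\<in>K. k \<le> n"
  shows "cis t * poly (pderiv (pair_poly n K)) (cis t)
    = cis (n * t) * (of_real (2 * n * cos_sum K t) + \<i> * of_real (2 * sin_moment K t))"
proof -
  have "cis t * poly (pderiv (pair_poly n K)) (cis t)
      = (\<Sum>k\<in>K. of_real (real (n + k)) * cis t ^ (n + k) + of_real (real (n - k)) * cis t ^ (n - k))"
    by (simp add: pair_poly_def pderiv_sum pderiv_add poly_sum sum_distrib_left distrib_left
        mult_poly_pderiv_monom del: of_nat_add)
  also have "\<dots> = cis (n * t) * (of_real (\<Sum>k\<in>K. 2 * n * cos (k * t))
                                 + \<i> * of_real (\<Sum>k\<in>K. 2 * k * sin (k * t)))"
    unfolding pair_sum_at_cis[OF assms] using assms by (simp add: of_nat_diff cong: sum.cong)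
  finally show ?thesis by (simp add: cos_sum_def sin_moment_def sum_distrib_left mult.assoc)
qed

lemma cis_power2_mult_poly_pderiv2_pair_poly:
  assumes "\<forall>k\<in>K. k \<le> n"
  shows "(cis t)\<^sup>2 * poly (pderiv (pderiv (pair_poly n K))) (cis t)
    = cis (n * t) * (of_real (2 * (real n * (real n - 1)) * cos_sum K t + 2 * cos_moment K t)
                     + \<i> * of_real ((4 * real n - 2) * sin_moment K t))"
proof -
  define w where "w m = real m * (real m - 1)" for m
  have "(\<Sum>k\<in>K. (w (n + k) + w (n - k)) * cos (k * t))
      = 2 * (real n * (real n - 1)) * cos_sum K t + 2 * cos_moment K t"
    unfolding cos_sum_def cos_moment_def sum_distrib_left sum.distrib[symmetric]
    by (intro sum.cong) (use assms in \<open>auto simp: w_def of_nat_diff algebra_simps power2_eq_square\<close>)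
  moreover have "(\<Sum>k\<in>K. (w (n + k) - w (n - k)) * sin (k * t)) = (4 * real n - 2) * sin_moment K t"
    unfolding sin_moment_def sum_distrib_left
    by (intro sum.cong) (use assms in \<open>auto simp: w_def of_nat_diff algebra_simps\<close>)
  moreover have "(cis t)\<^sup>2 * poly (pderiv (pderiv (pair_poly n K))) (cis t)
      = (\<Sum>k\<in>K. of_real (w (n + k)) * cis t ^ (n + k) + of_real (w (n - k)) * cis t ^ (n - k))"
    by (simp add: w_def pair_poly_def pderiv_sum pderiv_add poly_sum sum_distrib_left distrib_left
        power2_mult_poly_pderiv2_monom del: of_nat_add of_nat_diff)
  ultimately show ?thesis
    unfolding pair_sum_at_cis[OF assms] by simp
qed

lemma pair_poly_root_iff:
  assumes "\<forall>k\<in>K. k \<le> n"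
  shows "poly (pair_poly n K) (cis t) = 0 \<longleftrightarrow> cos_sum K t = 0"
  using poly_pair_poly_cis[OF assms, of t] by (simp add: cis_neq_zero)

lemma order_pair_poly_le_1:
  assumes "\<forall>k\<in>K. k \<le> n" "sin_moment K t \<noteq> 0"
  shows "order (cis t) (pair_poly n K) \<le> 1"
proof (rule order_le_if_poly_higher_pderiv_nonzero)
  have "of_real (2 * n * cos_sum K t) + \<i> * of_real (2 * sin_moment K t) \<noteq> 0"
    using assms(2) by (simp add: complex_eq_iff)
  then have "cis t * poly (pderiv (pair_poly n K)) (cis t) \<noteq> 0"
    unfolding cis_mult_poly_pderiv_pair_poly[OF assms(1)] by (simp add: cis_neq_zero)
  then show "poly ((pderiv ^^ 1) (pair_poly n K)) (cis t) \<noteq> 0" by simp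
qed

lemma order_pair_poly_le_2:
  assumes "\<forall>k\<in>K. k \<le> n" "cos_moment K t \<noteq> 0"
  shows "order (cis t) (pair_poly n K) \<le> 2"
proof (cases "sin_moment K t = 0")
  case False
  then show ?thesis using order_pair_poly_le_1[OF assms(1)] by fastforce
next
  case True
  show ?thesis
  proof (cases "cos_sum K t = 0")
    case False
    then have "poly ((pderiv ^^ 0) (pair_poly n K)) (cis t) \<noteq> 0"
      using pair_poly_root_iff[OF assms(1)] by simp
    then show ?thesis using order_le_if_poly_higher_pderiv_nonzero by fastforce
  next
    case zero: True
    have "(cis t)\<^sup>2 * poly (pderiv (pderiv (pair_poly n K))) (cis t) \<noteq> 0"
      using assms(2) True zero unfolding cis_power2_mult_poly_pderiv2_pair_poly[OF assms(1)]
      by (simp add: cis_neq_zero)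
    then have "poly ((pderiv ^^ 2) (pair_poly n K)) (cis t) \<noteq> 0"
      by (simp add: numeral_2_eq_2)
    then show ?thesis by (rule order_le_if_poly_higher_pderiv_nonzero)
  qed
qed

lemma abs_sin_moment_le: "\<bar>sin_moment K t\<bar> \<le> (\<Sum>k\<in>K. real k)"
  unfolding sin_moment_def
  by (rule order_trans[OF sum_abs], rule sum_mono) (simp add: abs_mult mult_left_le)

lemma abs_cos_moment_le: "\<bar>cos_moment K t\<bar> \<le> (\<Sum>k\<in>K. (real k)\<^sup>2)"
  unfolding cos_moment_def
  by (rule order_trans[OF sum_abs], rule sum_mono) (simp add: abs_mult mult_left_le)

lemma sin_moment_insert_nonzero:
  assumes "finite K" "n \<notin> K" "(\<Sum>k\<in>K. real k) < real n * \<bar>sin (n * t)\<bar>"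
  shows "sin_moment (insert n K) t \<noteq> 0"
proof -
  have "sin_moment (insert n K) t = real n * sin (n * t) + sin_moment K t"
    using assms(1,2) by (simp add: sin_moment_def)
  moreover have "\<bar>sin_moment K t\<bar> < \<bar>real n * sin (n * t)\<bar>"
    using abs_sin_moment_le[of K t] assms(3) by (simp add: abs_mult)
  ultimately show ?thesis by auto
qed

lemma cos_moment_insert_nonzero:
  assumes "finite K" "n \<notin> K" "(\<Sum>k\<in>K. (real k)\<^sup>2) < (real n)\<^sup>2 * \<bar>cos (n * t)\<bar>"
  shows "cos_moment (insert n K) t \<noteq> 0"
proof -
  have "cos_moment (insert n K) t = (real n)\<^sup>2 * cos (n * t) + cos_moment K t"
    using assms(1,2) by (simp add: cos_moment_def)
  moreover have "\<bar>cos_moment K t\<bar> < \<bar>(real n)\<^sup>2 * cos (n * t)\<bar>"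
    using abs_cos_moment_le[of K t] assms(3) by (simp add: abs_mult)
  ultimately show ?thesis by auto
qed

lemma sin_le_abs_sin_off_nodes:
  fixes j :: int
  assumes "0 \<le> c" "c \<le> pi / 2" "j * pi + c \<le> s" "s \<le> (j + 1) * pi - c"
  shows "sin c \<le> \<bar>sin s\<bar>"
proof -
  define x where "x = s - pi * j"
  have "\<bar>sin s\<bar> = \<bar>sin x\<bar>" by (simp add: x_def sin_diff abs_mult)
  have x: "c \<le> x" "x \<le> pi - c" using assms(3,4) by (simp_all add: x_def algebra_simps)
  have "sin c \<le> sin x"
  proof (cases "x \<le> pi / 2")
    case True
    then show ?thesis using assms(1) x by (intro sin_monotone_2pi_le) auto
  next
    case False
    then have "sin c \<le> sin (pi - x)" using assms(1) x by (intro sin_monotone_2pi_le) auto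
    then show ?thesis by simp
  qed
  then show ?thesis using \<open>\<bar>sin s\<bar> = \<bar>sin x\<bar>\<close> by linarith
qed

lemma cos_le_abs_cos_near_nodes:
  fixes j :: int
  assumes "c \<le> pi" "\<bar>s - j * pi\<bar> \<le> c"
  shows "cos c \<le> \<bar>cos s\<bar>"
proof -
  define x where "x = s - pi * j"
  have "\<bar>cos s\<bar> = \<bar>cos x\<bar>" by (simp add: x_def cos_diff abs_mult)
  have "cos c \<le> cos \<bar>x\<bar>" using assms by (intro cos_monotone_0_pi_le) (auto simp: x_def mult.commute)
  then show ?thesis using \<open>\<bar>cos s\<bar> = \<bar>cos x\<bar>\<close> by simp
qed

lemma abs_cos_le_cos_iff:
  assumes "0 \<le> t" "t < 2 * pi" "0 \<le> s" "s \<le> pi / 2"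
  shows "\<bar>cos t\<bar> \<le> cos s \<longleftrightarrow> (s \<le> t \<and> t \<le> pi - s) \<or> (pi + s \<le> t \<and> t \<le> 2 * pi - s)"
proof -
  have half: "\<bar>cos x\<bar> \<le> cos s \<longleftrightarrow> s \<le> x \<and> x \<le> pi - s" if "0 \<le> x" "x \<le> pi" for x
  proof -
    have "cos x \<le> cos s \<longleftrightarrow> s \<le> x" "cos (pi - s) \<le> cos x \<longleftrightarrow> x \<le> pi - s"
      using that assms(3,4) by (intro cos_mono_le_eq; simp)+
    then show ?thesis by (auto simp: abs_le_iff)
  qed
  show ?thesis
  proof (cases "t \<le> pi")
    case True
    then show ?thesis using half[of t] assms by auto
  next
    case False
    have "cos t = cos (2 * pi - t)" by (simp add: cos_diff)
    then show ?thesis using half[of "2 * pi - t"] assms False by auto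
  qed
qed

lemma inj_on_cos_sum_off_nodes:
  fixes j :: int
  assumes "finite K" "n \<notin> K" "0 < n" "0 \<le> c" "c \<le> pi / 2" "(\<Sum>k\<in>K. real k) < real n * sin c"
  shows "inj_on (cos_sum (insert n K)) {(j * pi + c) / n..((j + 1) * pi - c) / n}"
proof (rule inj_on_if_deriv_nonzero[OF cos_sum_has_real_derivative])
  fix t assume "(j * pi + c) / n \<le> t" "t \<le> ((j + 1) * pi - c) / n"
  then have "j * pi + c \<le> n * t" "n * t \<le> (j + 1) * pi - c"
    using assms(3) by (simp_all add: field_simps)
  then have "sin c \<le> \<bar>sin (n * t)\<bar>" using assms(4,5) by (rule sin_le_abs_sin_off_nodes[rotated 2])
  then have "(\<Sum>k\<in>K. real k) < real n * \<bar>sin (n * t)\<bar>"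
    using assms(6) mult_left_mono[of "sin c" "\<bar>sin (n * t)\<bar>" "real n"] by linarith
  then show "- sin_moment (insert n K) t \<noteq> 0" using sin_moment_insert_nonzero assms(1,2) by simp
qed

lemma finite_card_cos_sum_zeros_near_node_le_2:
  fixes j :: int
  assumes "finite K" "n \<notin> K" "0 < n" "c \<le> pi" "(\<Sum>k\<in>K. (real k)\<^sup>2) < (real n)\<^sup>2 * cos c"
  shows "finite {t \<in> {(j * pi - c) / n..(j * pi + c) / n}. cos_sum (insert n K) t = 0}"
    "card {t \<in> {(j * pi - c) / n..(j * pi + c) / n}. cos_sum (insert n K) t = 0} \<le> 2"
proof -
  have nonzero: "- cos_moment (insert n K) t \<noteq> 0"
    if "(j * pi - c) / n \<le> t" "t \<le> (j * pi + c) / n" for t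
  proof -
    from that have "\<bar>n * t - j * pi\<bar> \<le> c" using assms(3) by (simp add: field_simps abs_le_iff)
    then have "cos c \<le> \<bar>cos (n * t)\<bar>" using assms(4) by (rule cos_le_abs_cos_near_nodes[rotated])
    then have "(real n)\<^sup>2 * cos c \<le> (real n)\<^sup>2 * \<bar>cos (n * t)\<bar>" by (simp add: mult_left_mono)
    then have "(\<Sum>k\<in>K. (real k)\<^sup>2) < (real n)\<^sup>2 * \<bar>cos (n * t)\<bar>" using assms(5) by linarith
    then show ?thesis using cos_moment_insert_nonzero assms(1,2) by simp
  qed
  have deriv:
    "((\<lambda>t. - sin_moment (insert n K) t) has_real_derivative - cos_moment (insert n K) t) (at t)"
    if "(j * pi - c) / n \<le> t" "t \<le> (j * pi + c) / n" for t
    by (intro derivative_intros sin_moment_has_real_derivative)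
  show "finite {t \<in> {(j * pi - c) / n..(j * pi + c) / n}. cos_sum (insert n K) t = 0}"
    "card {t \<in> {(j * pi - c) / n..(j * pi + c) / n}. cos_sum (insert n K) t = 0} \<le> 2"
    using finite_card_zeros_le_2_if_second_deriv_nonzero[OF cos_sum_has_real_derivative deriv nonzero]
    by simp_all
qed

text \<open>Half of the Chebyshev polynomial \<open>U\<^sub>5\<close>: \<open>cos t + cos 3t + cos 5t = sin 6t / (2 sin t)\<close>.\<close>

definition odd_cos_poly :: "real \<Rightarrow> real" where
  "odd_cos_poly x = 16 * x ^ 5 - 16 * x ^ 3 + 3 * x"

lemma cos_sum_1_3_5: "cos_sum {1, 3, 5} t = odd_cos_poly (cos t)"
proof -
  have c2: "cos (2 * t) = 1 - 2 * (sin t)\<^sup>2" by (simp add: cos_double cos_squared_eq)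
  have s2: "sin (2 * t) = 2 * sin t * cos t" by (rule sin_double)
  have c3: "cos (3 * t) = 4 * cos t ^ 3 - 3 * cos t" by (rule cos_treble_cos)
  have "sin (3 * t) = sin (2 * t) * cos t + cos (2 * t) * sin t"
    using sin_add[of "2 * t" t] by simp
  then have s3: "sin (3 * t) = sin t * (3 - 4 * (sin t)\<^sup>2)"
    unfolding c2 s2 using cos_squared_eq[of t] by algebra
  have "cos (5 * t) = cos (3 * t) * cos (2 * t) - sin (3 * t) * sin (2 * t)"
    using cos_add[of "3 * t" "2 * t"] by simp
  also have "\<dots> = 16 * cos t ^ 5 - 20 * cos t ^ 3 + 5 * cos t"
    unfolding c2 s2 c3 s3 using sin_squared_eq[of t] by algebra
  finally show ?thesis by (simp add: cos_sum_def odd_cos_poly_def c3)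
qed

lemma P2n_eq_pair_poly: "5 < n \<Longrightarrow> P2n n = pair_poly n {n, 1, 3, 5}"
  by (simp add: P2n_def pair_poly_def mult_2 add_ac)

lemma degree_P2n: assumes "5 < n" shows "degree (P2n n) = 2 * n"
proof (rule antisym)
  show "degree (P2n n) \<le> 2 * n" using assms unfolding P2n_def
    by (intro degree_add_le) (auto simp: degree_monom_eq intro: order.trans[OF degree_monom_le])
  have "coeff (P2n n) (2 * n) = 1" using assms unfolding P2n_def by (auto simp: coeff_monom)
  then show "2 * n \<le> degree (P2n n)" by (intro le_degree) simp
qed

lemma P2n_nonzero: "5 < n \<Longrightarrow> P2n n \<noteq> 0"
  using degree_P2n[of n] by fastforce

lemma cos_sum_P2n: "5 < n \<Longrightarrow> cos_sum {n, 1, 3, 5} t = cos (n * t) + odd_cos_poly (cos t)"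
  by (simp add: cos_sum_def flip: cos_sum_1_3_5)

lemma P2n_root_iff:
  assumes "5 < n"
  shows "poly (P2n n) (cis t) = 0 \<longleftrightarrow> cos (n * t) + odd_cos_poly (cos t) = 0"
proof -
  have "\<forall>k\<in>{n, 1, 3, 5}. k \<le> n" using assms by simp
  then show ?thesis
    using pair_poly_root_iff[of "{n, 1, 3, 5}" n t] P2n_eq_pair_poly[OF assms]
      cos_sum_P2n[OF assms, of t]
    by simp
qed

text \<open>The constants \<open>9 = 1 + 3 + 5\<close> and \<open>35 = 1 + 9 + 25\<close> bound the first two derivatives of
  \<open>cos t + cos 3t + cos 5t\<close>.\<close>

lemma order_P2n_le_1:
  assumes "5 < n" "9 < n * \<bar>sin (n * t)\<bar>"
  shows "order (cis t) (P2n n) \<le> 1"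
proof -
  have "sin_moment (insert n {1, 3, 5}) t \<noteq> 0"
    using assms by (intro sin_moment_insert_nonzero) auto
  then show ?thesis
    using order_pair_poly_le_1[of "{n, 1, 3, 5}" n t] assms(1) by (simp add: P2n_eq_pair_poly)
qed

lemma order_P2n_le_2:
  assumes "5 < n" "35 < (real n)\<^sup>2 * \<bar>cos (n * t)\<bar>"
  shows "order (cis t) (P2n n) \<le> 2"
proof -
  have "cos_moment (insert n {1, 3, 5}) t \<noteq> 0"
    using assms by (intro cos_moment_insert_nonzero) auto
  then show ?thesis
    using order_pair_poly_le_2[of "{n, 1, 3, 5}" n t] assms(1) by (simp add: P2n_eq_pair_poly)
qed

lemma odd_cos_poly_less_1:
  assumes "0 \<le> x" "x \<le> 4/5"
  shows "odd_cos_poly x < 1"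
proof -
  \<comment> \<open>the coefficients of \<open>1 - odd_cos_poly\<close> in the Bernstein basis of \<open>[0, 4/5]\<close>\<close>
  define bs :: "real list"
    where "bs = [3125/1024, 8125/1024, 625/512, 5925/512, 36825/1024, 4841/1024]"
  have "1 - odd_cos_poly x = (\<Sum>i<length bs. bs ! i * (x - 0) ^ i * (4/5 - x) ^ (length bs - 1 - i))"
    by (simp add: bs_def odd_cos_poly_def eval_nat_numeral) algebra
  also have "0 < \<dots>"
    by (rule bernstein_form_pos) (use assms in \<open>auto simp: bs_def\<close>)
  finally show ?thesis by simp
qed

lemma odd_cos_poly_ge_neg: "0 \<le> x \<Longrightarrow> - x \<le> odd_cos_poly x"
proof -
  assume "0 \<le> x"
  have "odd_cos_poly x + x = x * (4 * x\<^sup>2 - 2)\<^sup>2"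
    unfolding odd_cos_poly_def by algebra
  moreover have "0 \<le> x * (4 * x\<^sup>2 - 2)\<^sup>2" using \<open>0 \<le> x\<close> by simp
  ultimately show ?thesis by linarith
qed

lemma odd_cos_poly_minus: "odd_cos_poly (- x) = - odd_cos_poly x"
  by (simp add: odd_cos_poly_def)

lemma abs_odd_cos_poly_abs: "\<bar>odd_cos_poly \<bar>x\<bar>\<bar> = \<bar>odd_cos_poly x\<bar>"
  by (cases "0 \<le> x") (simp_all add: odd_cos_poly_minus)

lemma odd_cos_poly_strict_mono:
  assumes "4/5 \<le> x" "x < y"
  shows "odd_cos_poly x < odd_cos_poly y"
proof (rule DERIV_pos_imp_increasing[OF assms(2)])
  fix t assume "x \<le> t" "t \<le> y"
  then have "(4/5)\<^sup>2 \<le> t\<^sup>2" using assms(1) by (intro power_mono) auto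
  then have "0 \<le> 5 * t\<^sup>2 - 3" by (simp add: power_divide)
  then have "0 \<le> t\<^sup>2 * (5 * t\<^sup>2 - 3)" by (rule mult_nonneg_nonneg[OF zero_le_power2])
  moreover have "80 * t ^ 4 - 48 * t\<^sup>2 + 3 = 16 * (t\<^sup>2 * (5 * t\<^sup>2 - 3)) + 3" by algebra
  ultimately have "0 < 80 * t ^ 4 - 48 * t\<^sup>2 + 3" by linarith
  moreover have "(odd_cos_poly has_real_derivative 80 * t ^ 4 - 48 * t\<^sup>2 + 3) (at t)"
    unfolding odd_cos_poly_def[abs_def]
    by (auto intro!: derivative_eq_intros simp: power2_eq_square)
  ultimately show "\<exists>d. (odd_cos_poly has_real_derivative d) (at t) \<and> 0 < d" by blast
qed

definition node_window :: "nat \<Rightarrow> real \<Rightarrow> real \<Rightarrow> int" where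
  "node_window n c t = \<lfloor>real n / pi * t + c / pi\<rfloor>"

lemma node_window_bounds:
  "node_window n c t * pi - c \<le> real n * t" "real n * t < (node_window n c t + 1) * pi - c"
proof -
  define y where "y = (real n * t + c) / pi"
  have w: "node_window n c t = \<lfloor>y\<rfloor>" by (simp add: node_window_def y_def add_divide_distrib)
  have "real n * t + c = y * pi" by (simp add: y_def)
  moreover have "real_of_int \<lfloor>y\<rfloor> * pi \<le> y * pi" "y * pi < (real_of_int \<lfloor>y\<rfloor> + 1) * pi"
    by (intro mult_right_mono mult_strict_right_mono; simp)+
  ultimately show "node_window n c t * pi - c \<le> real n * t"
    "real n * t < (node_window n c t + 1) * pi - c"
    unfolding w of_int_add of_int_1 by linarith+
qed

definition off_node_angles :: "nat \<Rightarrow> real \<Rightarrow> real set" where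
  "off_node_angles n c = {t \<in> unit_root_angles (P2n n). node_window n c t * pi + c \<le> real n * t}"

definition near_node_angles :: "nat \<Rightarrow> real \<Rightarrow> real set" where
  "near_node_angles n c = {t \<in> unit_root_angles (P2n n). real n * t < node_window n c t * pi + c}"

lemma unit_root_angles_P2n_split:
  "unit_root_angles (P2n n) = off_node_angles n c \<union> near_node_angles n c"
  "off_node_angles n c \<inter> near_node_angles n c = {}"
  by (auto simp: off_node_angles_def near_node_angles_def)

lemma off_node_angle_bounds:
  "t \<in> off_node_angles n c \<Longrightarrow>
    node_window n c t * pi + c \<le> real n * t \<and> real n * t \<le> (node_window n c t + 1) * pi - c"
  using node_window_bounds(2)[of n t c] by (simp add: off_node_angles_def)

lemma near_node_angle_bounds:
  "t \<in> near_node_angles n c \<Longrightarrow> \<bar>real n * t - node_window n c t * pi\<bar> \<le> c"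
  using node_window_bounds(1)[of n c t] by (auto simp: near_node_angles_def)

lemma cos_sum_P2n_root:
  "5 < n \<Longrightarrow> t \<in> unit_root_angles (P2n n) \<Longrightarrow> cos_sum {n, 1, 3, 5} t = 0"
  using cos_sum_P2n[of n t] by (simp add: unit_root_angles_def P2n_root_iff)

lemma order_P2n_off_node_le_1:
  assumes "5 < n" "9 < n * sin c" "0 < c" "c < pi / 2" "t \<in> off_node_angles n c"
  shows "order (cis t) (P2n n) \<le> 1"
proof (rule order_P2n_le_1[OF assms(1)])
  have "sin c \<le> \<bar>sin (real n * t)\<bar>"
    using off_node_angle_bounds[OF assms(5)] assms(3,4)
    by (intro sin_le_abs_sin_off_nodes[of c "node_window n c t"]) auto
  then have "real n * sin c \<le> real n * \<bar>sin (real n * t)\<bar>" by (simp add: mult_left_mono)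
  then show "9 < real n * \<bar>sin (real n * t)\<bar>" using assms(2) by linarith
qed

lemma inj_on_node_window_off_node_angles:
  assumes "5 < n" "9 < n * sin c" "0 < c" "c < pi / 2"
  shows "inj_on (node_window n c) (off_node_angles n c)"
proof (rule inj_onI)
  fix t t' assume t: "t \<in> off_node_angles n c" "t' \<in> off_node_angles n c"
    and eq: "node_window n c t = node_window n c t'"
  define j where "j = node_window n c t"
  have mem: "s \<in> {(j * pi + c) / n..((j + 1) * pi - c) / n}"
    if "s \<in> off_node_angles n c" "node_window n c s = j" for s
    using off_node_angle_bounds[OF that(1)] that(2) assms(1)
    by (simp add: pos_divide_le_eq pos_le_divide_eq mult.commute)
  have "inj_on (cos_sum (insert n {1, 3, 5})) {(j * pi + c) / n..((j + 1) * pi - c) / n}"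
    using assms by (intro inj_on_cos_sum_off_nodes) auto
  moreover have "cos_sum (insert n {1, 3, 5}) t = cos_sum (insert n {1, 3, 5}) t'"
    using cos_sum_P2n_root[OF assms(1), of t] cos_sum_P2n_root[OF assms(1), of t'] t
    by (simp add: off_node_angles_def)
  ultimately show "t = t'" using mem[OF t(1)] mem[OF t(2)] eq by (simp add: j_def inj_on_eq_iff)
qed

lemma order_P2n_near_node_le_2:
  assumes "5 < n" "35 < (real n)\<^sup>2 * cos c" "c \<le> pi" "t \<in> near_node_angles n c"
  shows "order (cis t) (P2n n) \<le> 2"
proof (rule order_P2n_le_2[OF assms(1)])
  have "cos c \<le> \<bar>cos (real n * t)\<bar>"
    using near_node_angle_bounds[OF assms(4)] assms(3) by (intro cos_le_abs_cos_near_nodes) auto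
  then have "(real n)\<^sup>2 * cos c \<le> (real n)\<^sup>2 * \<bar>cos (real n * t)\<bar>" by (simp add: mult_left_mono)
  then show "35 < (real n)\<^sup>2 * \<bar>cos (real n * t)\<bar>" using assms(2) by linarith
qed

lemma card_near_node_angles_window_le_2:
  assumes "5 < n" "35 < (real n)\<^sup>2 * cos c" "c \<le> pi"
  shows "card {t \<in> near_node_angles n c. node_window n c t = j} \<le> 2"
proof -
  let ?Z = "{t \<in> {(j * pi - c) / n..(j * pi + c) / n}. cos_sum (insert n {1, 3, 5}) t = 0}"
  have "{t \<in> near_node_angles n c. node_window n c t = j} \<subseteq> ?Z"
  proof
    fix t assume "t \<in> {t \<in> near_node_angles n c. node_window n c t = j}"
    then have t: "t \<in> near_node_angles n c" "node_window n c t = j" by auto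
    then have "j * pi - c \<le> real n * t" "real n * t \<le> j * pi + c"
      using near_node_angle_bounds[OF t(1)] by auto
    then have "(j * pi - c) / n \<le> t" "t \<le> (j * pi + c) / n"
      using assms(1) by (simp_all add: pos_divide_le_eq pos_le_divide_eq mult.commute)
    moreover have "cos_sum (insert n {1, 3, 5}) t = 0"
      using cos_sum_P2n_root[OF assms(1), of t] t(1) by (simp add: near_node_angles_def)
    ultimately show "t \<in> ?Z" by simp
  qed
  moreover have "finite ?Z" "card ?Z \<le> 2"
    using assms by (intro finite_card_cos_sum_zeros_near_node_le_2; simp)+
  ultimately show ?thesis by (meson card_mono order.trans)
qed

locale odd_cos_root =
  fixes \<beta> :: real
  assumes beta_pos: "0 < \<beta>" and beta_less_1: "\<beta> < 1" and odd_cos_poly_beta: "odd_cos_poly \<beta> = 1"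
begin

lemma four_fifths_less_beta: "4/5 < \<beta>"
  using odd_cos_poly_less_1[of \<beta>] beta_pos odd_cos_poly_beta by force

lemma abs_odd_cos_poly_less_1:
  assumes "\<bar>x\<bar> < \<beta>"
  shows "\<bar>odd_cos_poly x\<bar> < 1"
proof -
  have "odd_cos_poly \<bar>x\<bar> < 1"
  proof (cases "\<bar>x\<bar> \<le> 4/5")
    case True
    then show ?thesis by (simp add: odd_cos_poly_less_1)
  next
    case False
    then show ?thesis using odd_cos_poly_strict_mono[of "\<bar>x\<bar>" \<beta>] assms odd_cos_poly_beta by simp
  qed
  moreover have "- 1 < odd_cos_poly \<bar>x\<bar>"
    using odd_cos_poly_ge_neg[of "\<bar>x\<bar>"] assms beta_less_1 by simp
  ultimately show ?thesis using abs_odd_cos_poly_abs[of x] by linarith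
qed

lemma abs_le_beta_if_abs_odd_cos_poly_le_1:
  assumes "\<bar>odd_cos_poly x\<bar> \<le> 1"
  shows "\<bar>x\<bar> \<le> \<beta>"
proof (rule ccontr)
  assume "\<not> \<bar>x\<bar> \<le> \<beta>"
  then have "1 < odd_cos_poly \<bar>x\<bar>"
    using odd_cos_poly_strict_mono[of \<beta> "\<bar>x\<bar>"] four_fifths_less_beta odd_cos_poly_beta by simp
  then show False using assms abs_odd_cos_poly_abs[of x] by linarith
qed

definition \<alpha> :: real where "\<alpha> = arccos \<beta>"

lemma alpha_pos: "0 < \<alpha>" and alpha_less: "\<alpha> < pi / 2" and cos_alpha: "cos \<alpha> = \<beta>"
  using arccos_lt_bounded[of \<beta>] arccos_less_arccos[of 0 \<beta>] beta_pos beta_less_1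
  by (simp_all add: \<alpha>_def)

lemma unit_root_angle_P2n_in_arcs:
  assumes "5 < n" "t \<in> unit_root_angles (P2n n)"
  shows "t \<in> {\<alpha>..pi - \<alpha>} \<union> {pi + \<alpha>..2 * pi - \<alpha>}"
proof -
  have t: "0 \<le> t" "t < 2 * pi" "cos (n * t) + odd_cos_poly (cos t) = 0"
    using assms by (auto simp: unit_root_angles_def P2n_root_iff)
  then have "odd_cos_poly (cos t) = - cos (n * t)" by linarith
  then have "\<bar>odd_cos_poly (cos t)\<bar> \<le> 1" by simp
  then have "\<bar>cos t\<bar> \<le> cos \<alpha>" by (simp add: cos_alpha abs_le_beta_if_abs_odd_cos_poly_le_1)
  then have "(\<alpha> \<le> t \<and> t \<le> pi - \<alpha>) \<or> (pi + \<alpha> \<le> t \<and> t \<le> 2 * pi - \<alpha>)"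
    using abs_cos_le_cos_iff[OF t(1,2) less_imp_le[OF alpha_pos] less_imp_le[OF alpha_less]]
    by blast
  then show ?thesis by auto
qed

lemma exists_cos_bound_odd_cos_poly:
  assumes "0 \<le> b" "b < \<beta>"
  obtains c where "0 < c" "c < pi / 2" "1/2 \<le> cos c" "\<And>x. \<bar>x\<bar> \<le> b \<Longrightarrow> \<bar>odd_cos_poly x\<bar> < cos c"
proof -
  have "continuous_on {-b..b} (\<lambda>x. \<bar>odd_cos_poly x\<bar>)"
    unfolding odd_cos_poly_def by (intro continuous_intros)
  moreover have "{-b..b} \<noteq> {}" using assms(1) by simp
  ultimately obtain x0
    where x0: "x0 \<in> {-b..b}" "\<And>x. x \<in> {-b..b} \<Longrightarrow> \<bar>odd_cos_poly x\<bar> \<le> \<bar>odd_cos_poly x0\<bar>"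
    using continuous_attains_sup[OF compact_Icc] by blast
  define M where "M = \<bar>odd_cos_poly x0\<bar>"
  have M: "0 \<le> M" "M < 1"
    using abs_odd_cos_poly_less_1[of x0] x0(1) assms(2) by (auto simp: M_def)
  define c where "c = arccos ((1 + M) / 2)"
  have cos_c: "cos c = (1 + M) / 2" using M by (simp add: c_def)
  show thesis
  proof (rule that)
    show "0 < c" "c < pi / 2"
      using arccos_lt_bounded[of "(1 + M) / 2"] arccos_less_arccos[of 0 "(1 + M) / 2"] M
      by (simp_all add: c_def)
    show "1/2 \<le> cos c" using M cos_c by simp
    show "\<bar>odd_cos_poly x\<bar> < cos c" if "\<bar>x\<bar> \<le> b" for x
    proof -
      have "\<bar>odd_cos_poly x\<bar> \<le> M" using x0(2)[of x] that by (simp add: M_def abs_le_iff)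
      also have "M < (1 + M) / 2" using M by simp
      finally show ?thesis by (simp only: cos_c)
    qed
  qed
qed

lemma cos_alpha_plus_less_beta:
  assumes "0 < d" "\<alpha> + d \<le> pi / 2"
  shows "cos (\<alpha> + d) < \<beta>"
proof -
  have "cos (\<alpha> + d) < cos \<alpha>"
    by (rule cos_monotone_0_pi) (use assms alpha_pos in auto)
  then show ?thesis by (simp only: cos_alpha)
qed

lemma sum_order_off_node_angles_le:
  assumes "5 < n" "9 < n * sin c" "0 < c" "c < pi / 2"
  shows "real (\<Sum>t\<in>off_node_angles n c. order (cis t) (P2n n)) \<le> 2 * (n * (pi - 2 * \<alpha>) / pi + 3)"
proof -
  let ?Off = "off_node_angles n c"
  have "finite ?Off"
    using finite_unit_root_angles[OF P2n_nonzero[OF assms(1)]] by (simp add: off_node_angles_def)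
  then have "(\<Sum>t\<in>?Off. order (cis t) (P2n n)) \<le> card ?Off"
    using sum_mono[of ?Off "\<lambda>t. order (cis t) (P2n n)" "\<lambda>_. 1"] order_P2n_off_node_le_1[OF assms]
    by simp
  also have "card ?Off = card (node_window n c ` ?Off)"
    by (rule card_image[OF inj_on_node_window_off_node_angles[OF assms], symmetric])
  finally have "real (\<Sum>t\<in>?Off. order (cis t) (P2n n)) \<le> real (card (node_window n c ` ?Off))"
    by (rule of_nat_mono)
  also have "\<dots> \<le> (\<Sum>(l, u)\<leftarrow>[(\<alpha>, pi - \<alpha>), (pi + \<alpha>, 2 * pi - \<alpha>)]. n / pi * (u - l) + 3)"
    unfolding node_window_def[abs_def]
  proof (rule card_floor_image_le_sum)
    show "?Off \<subseteq> (\<Union>(l, u)\<in>set [(\<alpha>, pi - \<alpha>), (pi + \<alpha>, 2 * pi - \<alpha>)]. {l..u})"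
    proof
      fix t assume "t \<in> ?Off"
      then have "t \<in> {\<alpha>..pi - \<alpha>} \<union> {pi + \<alpha>..2 * pi - \<alpha>}"
        using unit_root_angle_P2n_in_arcs[OF assms(1)] by (simp add: off_node_angles_def)
      then show "t \<in> (\<Union>(l, u)\<in>set [(\<alpha>, pi - \<alpha>), (pi + \<alpha>, 2 * pi - \<alpha>)]. {l..u})" by simp
    qed
  qed (use alpha_less assms(3,4) in auto)
  also have "\<dots> = 2 * (n * (pi - 2 * \<alpha>) / pi + 3)" by (simp add: field_simps)
  finally show ?thesis .
qed

lemma near_node_angles_in_bands:
  assumes "5 < n" "0 < d" "\<alpha> + d \<le> pi / 2" "c \<le> pi"
    and gap: "\<And>x. \<bar>x\<bar> \<le> cos (\<alpha> + d) \<Longrightarrow> \<bar>odd_cos_poly x\<bar> < cos c"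
    and t: "t \<in> near_node_angles n c"
  shows "t \<in> {\<alpha>..\<alpha> + d} \<union> {pi - \<alpha> - d..pi - \<alpha>}
    \<union> {pi + \<alpha>..pi + \<alpha> + d} \<union> {2 * pi - \<alpha> - d..2 * pi - \<alpha>}"
proof -
  have t': "t \<in> unit_root_angles (P2n n)" using t by (simp add: near_node_angles_def)
  then have "cos (real n * t) + odd_cos_poly (cos t) = 0" "0 \<le> t" "t < 2 * pi"
    using assms(1) by (simp_all add: unit_root_angles_def P2n_root_iff)
  moreover have "cos c \<le> \<bar>cos (real n * t)\<bar>"
    using near_node_angle_bounds[OF t] assms(4) by (intro cos_le_abs_cos_near_nodes) auto
  ultimately have "\<not> \<bar>cos t\<bar> \<le> cos (\<alpha> + d)" using gap by force
  then have "\<not> ((\<alpha> + d \<le> t \<and> t \<le> pi - (\<alpha> + d)) \<or> (pi + (\<alpha> + d) \<le> t \<and> t \<le> 2 * pi - (\<alpha> + d)))"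
    using abs_cos_le_cos_iff[of t "\<alpha> + d"] \<open>0 \<le> t\<close> \<open>t < 2 * pi\<close> alpha_pos assms(2,3) by auto
  then show ?thesis using unit_root_angle_P2n_in_arcs[OF assms(1) t'] by auto
qed

lemma sum_order_near_node_angles_le:
  assumes "5 < n" "35 < (real n)\<^sup>2 * cos c" "0 < c" "c < pi / 2" "0 < d" "\<alpha> + d \<le> pi / 2"
    and gap: "\<And>x. \<bar>x\<bar> \<le> cos (\<alpha> + d) \<Longrightarrow> \<bar>odd_cos_poly x\<bar> < cos c"
  shows "real (\<Sum>t\<in>near_node_angles n c. order (cis t) (P2n n)) \<le> 16 * (n * d / pi + 3)"
proof -
  let ?Near = "near_node_angles n c"
  have c: "c \<le> pi" using assms(4) pi_gt_zero by linarith
  have fin: "finite ?Near"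
    using finite_unit_root_angles[OF P2n_nonzero[OF assms(1)]] by (simp add: near_node_angles_def)
  then have "(\<Sum>t\<in>?Near. order (cis t) (P2n n)) \<le> 2 * card ?Near"
    using sum_mono[of ?Near "\<lambda>t. order (cis t) (P2n n)" "\<lambda>_. 2"]
      order_P2n_near_node_le_2[OF assms(1,2) c]
    by simp
  also have "card ?Near \<le> 2 * card (node_window n c ` ?Near)"
    by (rule card_le_mult_card_image[OF fin card_near_node_angles_window_le_2[OF assms(1,2) c]])
  finally have "real (\<Sum>t\<in>?Near. order (cis t) (P2n n)) \<le> 4 * real (card (node_window n c ` ?Near))"
    by linarith
  also have "real (card (node_window n c ` ?Near)) \<le> (\<Sum>(l, u)\<leftarrow>[(\<alpha>, \<alpha> + d), (pi - \<alpha> - d, pi - \<alpha>),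
      (pi + \<alpha>, pi + \<alpha> + d), (2 * pi - \<alpha> - d, 2 * pi - \<alpha>)]. n / pi * (u - l) + 3)"
    unfolding node_window_def[abs_def]
  proof (rule card_floor_image_le_sum)
    show "?Near \<subseteq> (\<Union>(l, u)\<in>set [(\<alpha>, \<alpha> + d), (pi - \<alpha> - d, pi - \<alpha>),
        (pi + \<alpha>, pi + \<alpha> + d), (2 * pi - \<alpha> - d, 2 * pi - \<alpha>)]. {l..u})"
    proof
      fix t assume "t \<in> ?Near"
      from near_node_angles_in_bands[OF assms(1,5,6) c gap this]
      show "t \<in> (\<Union>(l, u)\<in>set [(\<alpha>, \<alpha> + d), (pi - \<alpha> - d, pi - \<alpha>),
          (pi + \<alpha>, pi + \<alpha> + d), (2 * pi - \<alpha> - d, 2 * pi - \<alpha>)]. {l..u})" by simp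
    qed
  qed (use assms(3-5) in auto)
  also have "(\<Sum>(l, u)\<leftarrow>[(\<alpha>, \<alpha> + d), (pi - \<alpha> - d, pi - \<alpha>),
      (pi + \<alpha>, pi + \<alpha> + d), (2 * pi - \<alpha> - d, 2 * pi - \<alpha>)]. n / pi * (u - l) + 3)
    = 4 * (n * d / pi + 3)"
    by (simp add: field_simps)
  finally show ?thesis by simp
qed

lemma unit_root_count_P2n_le:
  assumes "5 < n" "9 < n * sin c" "35 < (real n)\<^sup>2 * cos c" "0 < c" "c < pi / 2"
    and "0 < d" "\<alpha> + d \<le> pi / 2"
    and gap: "\<And>x. \<bar>x\<bar> \<le> cos (\<alpha> + d) \<Longrightarrow> \<bar>odd_cos_poly x\<bar> < cos c"
  shows "real (unit_root_count (P2n n)) \<le> 2 * (n * (pi - 2 * \<alpha>) / pi + 3) + 16 * (n * d / pi + 3)"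
proof -
  have "finite (unit_root_angles (P2n n))"
    by (rule finite_unit_root_angles[OF P2n_nonzero[OF assms(1)]])
  then have "unit_root_count (P2n n) = (\<Sum>t\<in>off_node_angles n c. order (cis t) (P2n n))
      + (\<Sum>t\<in>near_node_angles n c. order (cis t) (P2n n))"
    unfolding unit_root_count_def unit_root_angles_P2n_split(1)[of n c]
    by (intro sum.union_disjoint unit_root_angles_P2n_split(2))
      (auto simp: unit_root_angles_P2n_split(1))
  then show ?thesis
    using sum_order_off_node_angles_le[OF assms(1,2,4,5)]
      sum_order_near_node_angles_le[OF assms(1,3-7) gap]
    by linarith
qed

lemma abs_odd_cos_poly_cos_less_1:
  assumes "0 < d" "\<alpha> + d \<le> pi / 2"
    and "t \<in> {\<alpha> + d..pi - \<alpha> - d} \<union> {pi + \<alpha> + d..2 * pi - \<alpha> - d}"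
  shows "\<bar>odd_cos_poly (cos t)\<bar> < 1"
proof -
  have ad: "0 \<le> \<alpha> + d" using alpha_pos assms(1) by simp
  have t: "0 \<le> t" "t < 2 * pi"
    "(\<alpha> + d \<le> t \<and> t \<le> pi - (\<alpha> + d)) \<or> (pi + (\<alpha> + d) \<le> t \<and> t \<le> 2 * pi - (\<alpha> + d))"
    using assms(3) ad alpha_pos assms(1) pi_gt_zero by auto
  then have "\<bar>cos t\<bar> \<le> cos (\<alpha> + d)" using abs_cos_le_cos_iff[OF t(1,2) ad assms(2)] by blast
  then show ?thesis using abs_odd_cos_poly_less_1 cos_alpha_plus_less_beta[OF assms(1,2)] by simp
qed

lemma exists_unit_root_angles_P2n_in_inner_arcs:
  assumes "5 < n" "0 < d" "\<alpha> + d \<le> pi / 2"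
    and arcs: "{l..u} \<subseteq> {\<alpha> + d..pi - \<alpha> - d} \<union> {pi + \<alpha> + d..2 * pi - \<alpha> - d}"
  obtains S where "finite S" "S \<subseteq> unit_root_angles (P2n n) \<inter> {l..u}"
    "real n * (u - l) / pi - 2 \<le> card S"
proof -
  define G where "G t = odd_cos_poly (cos t)" for t
  have n0: "0 < n" using assms(1) by simp
  have "continuous_on {l..u} G" unfolding G_def odd_cos_poly_def by (intro continuous_intros)
  moreover have "\<bar>G t\<bar> < 1" if "l \<le> t" "t \<le> u" for t
    unfolding G_def using that arcs by (intro abs_odd_cos_poly_cos_less_1[OF assms(2,3)]) auto
  ultimately obtain S where S: "finite S" "S \<subseteq> {t \<in> {l..u}. cos (real n * t) + G t = 0}"
    "real n * (u - l) / pi - 2 \<le> card S"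
    by (rule exists_zeros_cos_plus[OF n0])
  have sub: "S \<subseteq> unit_root_angles (P2n n) \<inter> {l..u}"
  proof
    fix t assume "t \<in> S"
    then have t: "t \<in> {l..u}" "cos (real n * t) + G t = 0" using S(2) by auto
    then have "t \<in> {\<alpha> + d..pi - \<alpha> - d} \<union> {pi + \<alpha> + d..2 * pi - \<alpha> - d}" using arcs by blast
    then have "0 \<le> t" "t < 2 * pi" using alpha_pos assms(2) pi_gt_zero by auto
    then show "t \<in> unit_root_angles (P2n n) \<inter> {l..u}"
      using t assms(1) by (simp add: unit_root_angles_def P2n_root_iff G_def)
  qed
  from S(1) sub S(3) show thesis by (rule that)
qed

lemma unit_root_count_P2n_ge:
  assumes n: "5 < n" and d: "0 < d" "\<alpha> + d \<le> pi / 2"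
  shows "2 * (n * (pi - 2 * \<alpha> - 2 * d) / pi) - 4 \<le> real (unit_root_count (P2n n))"
proof -
  obtain S1 where S1: "finite S1" "S1 \<subseteq> unit_root_angles (P2n n) \<inter> {\<alpha> + d..pi - \<alpha> - d}"
    "real n * (pi - \<alpha> - d - (\<alpha> + d)) / pi - 2 \<le> card S1"
    by (rule exists_unit_root_angles_P2n_in_inner_arcs[OF n d Un_upper1])
  obtain S2 where S2: "finite S2" "S2 \<subseteq> unit_root_angles (P2n n) \<inter> {pi + \<alpha> + d..2 * pi - \<alpha> - d}"
    "real n * (2 * pi - \<alpha> - d - (pi + \<alpha> + d)) / pi - 2 \<le> card S2"
    by (rule exists_unit_root_angles_P2n_in_inner_arcs[OF n d Un_upper2])
  have disj: "S1 \<inter> S2 = {}"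
  proof (rule equals0I)
    fix t assume "t \<in> S1 \<inter> S2"
    then have "t \<le> pi - \<alpha> - d" "pi + \<alpha> + d \<le> t" using S1(2) S2(2) by auto
    then show False using alpha_pos d by linarith
  qed
  have "card S1 + card S2 = card (S1 \<union> S2)"
    by (rule card_Un_disjoint[OF S1(1) S2(1) disj, symmetric])
  also have "\<dots> \<le> card (unit_root_angles (P2n n))"
    using S1(2) S2(2) by (intro card_mono[OF finite_unit_root_angles[OF P2n_nonzero[OF n]]]) auto
  also have "\<dots> \<le> unit_root_count (P2n n)"
    by (rule card_unit_root_angles_le[OF P2n_nonzero[OF n]])
  finally have total: "real (card S1) + real (card S2) \<le> real (unit_root_count (P2n n))"
    by (simp only: of_nat_add[symmetric] of_nat_le_iff)
  define X where "X = real n * (pi - 2 * \<alpha> - 2 * d) / pi"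
  have "real n * (pi - \<alpha> - d - (\<alpha> + d)) / pi = X"
    "real n * (2 * pi - \<alpha> - d - (pi + \<alpha> + d)) / pi = X"
    by (simp_all add: X_def algebra_simps)
  then have "X - 2 \<le> real (card S1)" "X - 2 \<le> real (card S2)" using S1(3) S2(3) by simp_all
  then have "2 * X - 4 \<le> real (card S1) + real (card S2)" by simp
  then show ?thesis using total unfolding X_def by simp
qed

lemma unit_root_count_P2n_deviation:
  assumes "5 < n" "9 < n * sin c" "35 < (real n)\<^sup>2 * cos c" "0 < c" "c < pi / 2"
    and "0 < d" "\<alpha> + d \<le> pi / 2"
    and gap: "\<And>x. \<bar>x\<bar> \<le> cos (\<alpha> + d) \<Longrightarrow> \<bar>odd_cos_poly x\<bar> < cos c"
  shows "\<bar>real (unit_root_count (P2n n)) / (2 * n) - (1 - 2 * \<alpha> / pi)\<bar> \<le> 8 * d / pi + 27 / n"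
proof -
  define U where "U = real (unit_root_count (P2n n))"
  define A where "A = real n * (pi - 2 * \<alpha>) / pi"
  define D where "D = real n * d / pi"
  have "U \<le> 2 * (A + 3) + 16 * (D + 3)"
    using unit_root_count_P2n_le[OF assms] by (simp add: U_def A_def D_def)
  moreover have "real n * (pi - 2 * \<alpha> - 2 * d) / pi = A - 2 * D"
    by (simp add: A_def D_def diff_divide_distrib right_diff_distrib)
  then have "2 * A - 4 * D - 4 \<le> U"
    using unit_root_count_P2n_ge[OF assms(1,6,7)] by (simp add: U_def)
  moreover have "0 \<le> D" using assms(6) by (simp add: D_def)
  ultimately have "U - 2 * A \<le> 16 * D + 54" and "2 * A - U \<le> 16 * D + 54" by auto
  then have bound: "\<bar>U - 2 * A\<bar> \<le> 16 * D + 54" by (simp add: abs_le_iff)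
  have "U / (2 * n) - (1 - 2 * \<alpha> / pi) = (U - 2 * A) / (2 * n)"
    using assms(1) by (simp add: A_def field_simps)
  then have "\<bar>U / (2 * n) - (1 - 2 * \<alpha> / pi)\<bar> = \<bar>U - 2 * A\<bar> / (2 * n)"
    by (simp add: abs_divide)
  also have "\<dots> \<le> (16 * D + 54) / (2 * n)"
    using bound by (rule divide_right_mono) simp
  also have "\<dots> = 8 * d / pi + 27 / n"
    using assms(1) by (simp add: D_def field_simps)
  finally show ?thesis by (simp add: U_def)
qed

lemma unit_root_count_P2n_tendsto:
  "(\<lambda>n. real (unit_root_count (P2n n)) / (2 * n)) \<longlonglongrightarrow> 1 - 2 * \<alpha> / pi"
proof (rule LIMSEQ_I)
  fix \<epsilon> :: real assume \<epsilon>: "0 < \<epsilon>"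
  define d where "d = min (\<epsilon> * pi / 32) (pi / 2 - \<alpha>)"
  have "d \<le> pi / 2 - \<alpha>" by (simp add: d_def)
  then have d: "0 < d" "\<alpha> + d \<le> pi / 2" using \<epsilon> alpha_less by (simp add: d_def, linarith)
  have "d \<le> \<epsilon> * pi / 32" unfolding d_def by (rule min.cobounded1)
  then have d_small: "8 * d / pi \<le> \<epsilon> / 4" by (simp add: field_simps)
  have "0 \<le> cos (\<alpha> + d)" using d alpha_pos by (intro cos_ge_zero) auto
  then obtain c where c: "0 < c" "c < pi / 2" "1/2 \<le> cos c"
    "\<And>x. \<bar>x\<bar> \<le> cos (\<alpha> + d) \<Longrightarrow> \<bar>odd_cos_poly x\<bar> < cos c"
    using exists_cos_bound_odd_cos_poly cos_alpha_plus_less_beta[OF d] by blast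
  have sin_c: "0 < sin c" using c by (intro sin_gt_zero) auto
  define M where "M = max 9 (max (9 / sin c) (54 / \<epsilon>))"
  show "\<exists>N. \<forall>n\<ge>N. norm (real (unit_root_count (P2n n)) / (2 * n) - (1 - 2 * \<alpha> / pi)) < \<epsilon>"
  proof (intro exI allI impI)
    fix n assume "nat \<lceil>M\<rceil> + 1 \<le> n"
    then have "M < real n" using real_nat_ceiling_ge[of M] by linarith
    then have n: "9 < real n" "9 / sin c < n" "54 / \<epsilon> < n" by (auto simp: M_def)
    have n5: "5 < n" using n(1) by simp
    have n9: "9 < n * sin c" using n(2) sin_c by (simp add: divide_less_eq mult.commute)
    have "9 * 9 \<le> real n * real n" using n(1) by (intro mult_mono) auto
    then have "81 * (1/2) \<le> (real n)\<^sup>2 * cos c"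
      using c(3) by (intro mult_mono) (auto simp: power2_eq_square)
    then have n35: "35 < (real n)\<^sup>2 * cos c" by simp
    have "54 < real n * \<epsilon>" using n(3) \<epsilon> by (simp add: divide_less_eq)
    moreover have "0 < real n" using n5 by simp
    ultimately have "27 / real n < \<epsilon> / 2" by (simp add: field_simps)
    then show "norm (real (unit_root_count (P2n n)) / (2 * n) - (1 - 2 * \<alpha> / pi)) < \<epsilon>"
      using unit_root_count_P2n_deviation[OF n5 n9 n35 c(1,2) d c(4)] d_small \<epsilon>
      unfolding real_norm_def by linarith
  qed
qed

end

theorem mainTheorem8:
  fixes \<beta> :: real
  assumes "0 < \<beta>" and "\<beta> < 1"
    and "16 * \<beta>^5 - 16 * \<beta>^3 + 3 * \<beta> = 1"
  shows "(\<lambda>n. C_ratio (P2n n)) \<longlonglongrightarrow> 2 / pi * arccos \<beta>"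
proof -
  interpret odd_cos_root \<beta>
    using assms by unfold_locales (simp_all add: odd_cos_poly_def)
  have "(\<lambda>n. 1 - real (unit_root_count (P2n n)) / (2 * n)) \<longlonglongrightarrow> 1 - (1 - 2 * \<alpha> / pi)"
    by (intro tendsto_diff tendsto_const unit_root_count_P2n_tendsto)
  moreover have
    "\<forall>\<^sub>F n in sequentially. 1 - real (unit_root_count (P2n n)) / (2 * n) = C_ratio (P2n n)"
    using eventually_gt_at_top[of 5]
    by eventually_elim (simp add: C_ratio_eq_unit_root_count P2n_nonzero degree_P2n)
  ultimately show ?thesis
    by (simp add: Lim_transform_eventually \<alpha>_def)
qed

end
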